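(* Let $n\geq2$, $p=n$, $q=1$ and $k>0$ with $k^2>1/(n-1)$. Then the critical velocity is $\overline{c}=\frac{k^2-1}{k}$, and the trajectory $l_{\overline{c}}$ is the curve $Y=k(X-X^n)$, $X\in[0,1]$, corresponding to the traveling wave profiles $f(\xi)=(1+Ce^{-k(n-1)\xi})^{-1/(n-1)}$, $C>0$.
   Context: Consider $u_t=u_{xx}+k(u^n)_x+u^p-u^q$; traveling waves $u=f(x+ct)$ satisfy $f''=cf'-knf^{n-1}f'-f^p+f^q$, equivalently the system $X'=Y$, $Y'=cY-knX^{n-1}Y-X^p+X^q$ ($X=f$, $Y=f'$) with critical points $P_1=(0,0)$, $P_2=(1,0)$. For each $c$, $l_c$ is the unique trajectory leaving $P_1$ (as $\xi\to-\infty$) into $\{X>0,Y>0\}$; it connects directly $P_1$ to $P_2$ if it tends to $P_2$ as $\xi\to\infty$ with $X>0,Y>0$ throughout. The critical velocity is $\overline{c}=\sup\{c: l_c\text{ connects directly }P_1\text{ and }P_2\}$. *)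

theory Defs
  imports "HOL-Analysis.Analysis"
begin

definition tw_solution ::
  "nat \<Rightarrow> nat \<Rightarrow> nat \<Rightarrow> real \<Rightarrow> real \<Rightarrow> (real \<Rightarrow> real) \<Rightarrow> (real \<Rightarrow> real) \<Rightarrow> bool" where
  "tw_solution n p q k c X Y \<longleftrightarrow>
     (\<forall>t. (X has_real_derivative Y t) (at t) \<and>
          (Y has_real_derivative
              (c * Y t - k * real n * X t ^ (n - 1) * Y t - X t ^ p + X t ^ q)) (at t))"

definition direct_connection ::
  "nat \<Rightarrow> nat \<Rightarrow> nat \<Rightarrow> real \<Rightarrow> real \<Rightarrow> (real \<Rightarrow> real) \<Rightarrow> (real \<Rightarrow> real) \<Rightarrow> bool" where
  "direct_connection n p q k c X Y \<longleftrightarrow>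
     tw_solution n p q k c X Y \<and>
     (\<forall>t. X t > 0 \<and> Y t > 0) \<and>
     ((\<lambda>t. (X t, Y t)) \<longlongrightarrow> (0, 0)) at_bot \<and>
     ((\<lambda>t. (X t, Y t)) \<longlongrightarrow> (1, 0)) at_top"

text \<open>l_c connects P1 and P2 directly.  Since l_c is the unique trajectory leaving P1 into
  the open first quadrant, this holds iff some solution is a direct connection.\<close>
definition connects_directly :: "nat \<Rightarrow> nat \<Rightarrow> nat \<Rightarrow> real \<Rightarrow> real \<Rightarrow> bool" where
  "connects_directly n p q k c \<longleftrightarrow> (\<exists>X Y. direct_connection n p q k c X Y)"

definition critical_velocity :: "nat \<Rightarrow> nat \<Rightarrow> nat \<Rightarrow> real \<Rightarrow> real" where
  "critical_velocity n p q k = Sup {c. connects_directly n p q k c}"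

end

theory Submission
  imports Defs "HOL-Real_Asymp.Real_Asymp"
begin

(*
  Let D = Y - k (X - X^n) be the deviation of a trajectory from the curve Y = k (X - X^n).
  Along solutions, D' = (c - cbar) Y - D / k with cbar = (k^2 - 1) / k, so exp (t / k) D is
  nondecreasing for c >= cbar, and it tends to 0 as t -> -infinity on a direct connection.

  For c = cbar it is constant, hence zero: the connection runs along the curve, X solves the
  Bernoulli equation X' = k (X - X^n), and X^(n-1) solves a logistic equation.

  For c > cbar we get D >= D(0) exp (-t / k) > 0, so 1 - X >= k D(0) exp (-t / k).  On the other
  hand Y > k (X - X^n), which is about k (n - 1) (1 - X) near X = 1, so 1 - X decays at least
  like exp (-r t) for every r < k (n - 1).  These bounds clash because k^2 > 1 / (n - 1) means
  exactly k (n - 1) > 1 / k.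
*)

definition deviation :: "nat \<Rightarrow> real \<Rightarrow> (real \<Rightarrow> real) \<Rightarrow> (real \<Rightarrow> real) \<Rightarrow> real \<Rightarrow> real" where
  "deviation n k X Y t = Y t - k * (X t - X t ^ n)"

lemma tw_solution_has_derivative:
  assumes "tw_solution n p q k c X Y"
  shows "(X has_real_derivative Y t) (at t)"
    and "(Y has_real_derivative (c * Y t - k * real n * X t ^ (n - 1) * Y t - X t ^ p + X t ^ q)) (at t)"
  using assms unfolding tw_solution_def by auto

lemma direct_connectionD:
  assumes "direct_connection n p q k c X Y"
  shows "tw_solution n p q k c X Y" "X t > 0" "Y t > 0"
    and "(X \<longlongrightarrow> 0) at_bot" "(Y \<longlongrightarrow> 0) at_bot" "(X \<longlongrightarrow> 1) at_top" "(Y \<longlongrightarrow> 0) at_top"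
proof -
  have bot: "((\<lambda>t. (X t, Y t)) \<longlongrightarrow> (0, 0)) at_bot" and top: "((\<lambda>t. (X t, Y t)) \<longlongrightarrow> (1, 0)) at_top"
    using assms unfolding direct_connection_def by auto
  show "tw_solution n p q k c X Y" "X t > 0" "Y t > 0"
    using assms unfolding direct_connection_def by auto
  show "(X \<longlongrightarrow> 0) at_bot" "(Y \<longlongrightarrow> 0) at_bot"
    using tendsto_fst[OF bot] tendsto_snd[OF bot] by simp_all
  show "(X \<longlongrightarrow> 1) at_top" "(Y \<longlongrightarrow> 0) at_top"
    using tendsto_fst[OF top] tendsto_snd[OF top] by simp_all
qed

lemma direct_connection_less_one:
  assumes "direct_connection n p q k c X Y"
  shows "X t < 1"
proof -
  note dc = direct_connectionD[OF assms]
  have "- 1 < - X t"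
  proof (rule DERIV_neg_imp_decreasing_at_top[where f = "\<lambda>s. - X s"])
    fix s
    have "((\<lambda>s. - X s) has_real_derivative - Y s) (at s)"
      using tw_solution_has_derivative(1)[OF dc(1)] by (rule DERIV_minus)
    then show "\<exists>y. ((\<lambda>s. - X s) has_real_derivative y) (at s) \<and> y < 0"
      using dc(3)[of s] by auto
  qed (use tendsto_minus[OF dc(6)] in simp)
  then show ?thesis by simp
qed

lemma power_less_self:
  fixes x :: real
  assumes "0 < x" "x < 1" "n \<ge> 2"
  shows "x ^ n < x"
  using power_strict_decreasing[of 1 n x] assms by simp

lemma weighted_deviation_has_derivative:
  assumes tw: "tw_solution n n 1 k c X Y" and k: "k > 0"
  shows "((\<lambda>t. exp (t / k) * deviation n k X Y t) has_real_derivative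
           exp (t / k) * ((c - (k ^ 2 - 1) / k) * Y t)) (at t)"
proof -
  note dX = tw_solution_has_derivative(1)[OF tw] and dY = tw_solution_has_derivative(2)[OF tw]
  have "(deviation n k X Y has_real_derivative
      (c * Y t - k * real n * X t ^ (n - 1) * Y t - X t ^ n + X t ^ 1)
      - k * (Y t - real n * X t ^ (n - 1) * Y t)) (at t)"
    unfolding deviation_def[abs_def] by (rule derivative_eq_intros dX dY refl | simp)+
  then have "((\<lambda>t. exp (t / k) * deviation n k X Y t) has_real_derivative
      exp (t / k) * (1 / k) * deviation n k X Y t
      + exp (t / k) * ((c * Y t - k * real n * X t ^ (n - 1) * Y t - X t ^ n + X t ^ 1)
                       - k * (Y t - real n * X t ^ (n - 1) * Y t))) (at t)"
    using k by (auto intro!: derivative_eq_intros)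
  moreover have "exp (t / k) * (1 / k) * deviation n k X Y t
      + exp (t / k) * ((c * Y t - k * real n * X t ^ (n - 1) * Y t - X t ^ n + X t ^ 1)
                       - k * (Y t - real n * X t ^ (n - 1) * Y t))
      = exp (t / k) * ((c - (k ^ 2 - 1) / k) * Y t)"
    using k by (simp add: deviation_def field_simps power2_eq_square)
  ultimately show ?thesis by simp
qed

lemma weighted_deviation_tendsto_at_bot:
  assumes "direct_connection n p q k c X Y" "n \<ge> 1" "k > 0"
  shows "((\<lambda>t. exp (t / k) * deviation n k X Y t) \<longlongrightarrow> 0) at_bot"
proof -
  note dc = direct_connectionD[OF assms(1)]
  have "((\<lambda>t::real. exp (t / k)) \<longlongrightarrow> 0) at_bot"
    using \<open>k > 0\<close> by real_asymp
  moreover have "(deviation n k X Y \<longlongrightarrow> 0 - k * (0 - 0 ^ n)) at_bot"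
    unfolding deviation_def[abs_def] by (intro tendsto_intros dc)
  ultimately show ?thesis
    using \<open>n \<ge> 1\<close> tendsto_mult by fastforce
qed

lemma direct_connection_critical_on_curve:
  assumes dc: "direct_connection n n 1 k ((k ^ 2 - 1) / k) X Y" and "n \<ge> 1" "k > 0"
  shows "Y t = k * (X t - X t ^ n)"
proof -
  define E where "E t = exp (t / k) * deviation n k X Y t" for t
  have "E s = E t" for s
    using DERIV_isconst_all weighted_deviation_has_derivative[OF direct_connectionD(1)[OF dc] \<open>k > 0\<close>]
    unfolding E_def[abs_def] by fastforce
  then have "(E \<longlongrightarrow> E t) at_bot"
    by (intro tendsto_eventually always_eventually) blast
  moreover have "(E \<longlongrightarrow> 0) at_bot"
    unfolding E_def[abs_def] using weighted_deviation_tendsto_at_bot[OF dc assms(2,3)] .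
  ultimately have "E t = 0"
    using tendsto_unique[OF trivial_limit_at_bot_linorder] by blast
  then show ?thesis
    unfolding E_def deviation_def by simp
qed

lemma deviation_exp_lower_bound:
  assumes dc: "direct_connection n n 1 k c X Y" and "n \<ge> 1" "k > 0"
    and c: "c > (k ^ 2 - 1) / k"
  obtains a where "a > 0" "\<And>t. deviation n k X Y t > 0"
    "\<And>t. t \<ge> 0 \<Longrightarrow> a * exp (- t / k) \<le> deviation n k X Y t"
proof -
  define E where "E t = exp (t / k) * deviation n k X Y t" for t
  have dE: "(E has_real_derivative exp (t / k) * ((c - (k ^ 2 - 1) / k) * Y t)) (at t)" for t
    unfolding E_def[abs_def]
    using weighted_deviation_has_derivative[OF direct_connectionD(1)[OF dc] \<open>k > 0\<close>] .
  have dE_pos: "exp (t / k) * ((c - (k ^ 2 - 1) / k) * Y t) > 0" for t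
    using c direct_connectionD(3)[OF dc] by simp
  have E_pos: "E t > 0" for t
  proof (rule DERIV_pos_imp_increasing_at_bot[where f = E])
    show "\<exists>y. (E has_real_derivative y) (at s) \<and> 0 < y" for s
      using dE dE_pos by blast
    show "(E \<longlongrightarrow> 0) at_bot"
      unfolding E_def[abs_def] by (rule weighted_deviation_tendsto_at_bot[OF dc assms(2,3)])
  qed
  have deviation_pos: "deviation n k X Y t > 0" for t
    using E_pos[of t] unfolding E_def by (simp add: zero_less_mult_iff)
  have "deviation n k X Y 0 * exp (- t / k) \<le> deviation n k X Y t" if "t \<ge> 0" for t
  proof -
    have "E 0 \<le> E t"
      using DERIV_nonneg_imp_nondecreasing[OF that] dE dE_pos less_imp_le by blast
    then have "deviation n k X Y 0 * exp (- t / k) \<le> exp (t / k) * deviation n k X Y t * exp (- t / k)"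
      unfolding E_def by (simp add: mult_right_mono)
    also have "\<dots> = deviation n k X Y t"
      by (simp add: mult.commute mult.left_commute flip: exp_add)
    finally show ?thesis .
  qed
  with deviation_pos show thesis
    using that[of "deviation n k X Y 0"] by blast
qed

lemma limit_gap_ge_exp:
  fixes X Y :: "real \<Rightarrow> real"
  assumes dX: "\<And>t. (X has_real_derivative Y t) (at t)" and lim: "(X \<longlongrightarrow> L) at_top"
    and Y: "\<And>t. t \<ge> 0 \<Longrightarrow> a * exp (- t / k) \<le> Y t" and "k > 0" "t \<ge> 0"
  shows "k * a * exp (- t / k) \<le> L - X t"
proof -
  define w where "w s = L - X s - k * a * exp (- s / k)" for s
  have dw: "(w has_real_derivative a * exp (- s / k) - Y s) (at s)" for s
    unfolding w_def using \<open>k > 0\<close>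
    by (auto intro!: derivative_eq_intros dX simp: field_simps)
  have "w s \<le> w t" if "s \<ge> t" for s
    using DERIV_nonpos_imp_nonincreasing[OF that] dw Y \<open>t \<ge> 0\<close> by force
  moreover have "(w \<longlongrightarrow> L - L - k * a * 0) at_top"
    unfolding w_def[abs_def] using \<open>k > 0\<close> by (intro tendsto_intros lim) real_asymp
  ultimately have "0 \<le> w t"
    by (intro tendsto_upperbound[where f = w and F = at_top]) (auto simp: eventually_at_top_linorder)
  then show ?thesis
    unfolding w_def by simp
qed

lemma gap_to_one_le_exp:
  fixes X Y :: "real \<Rightarrow> real"
  assumes dX: "\<And>t. (X has_real_derivative Y t) (at t)" and lim: "(X \<longlongrightarrow> 1) at_top"
    and X_le: "\<And>t. X t \<le> 1" and Y: "\<And>t. k * (X t - X t ^ n) \<le> Y t"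
    and "n \<ge> 1" and r: "r < k * (real n - 1)"
  shows "\<exists>M. \<forall>\<^sub>F t in at_top. 1 - X t \<le> M * exp (- r * t)"
proof -
  define S where "S t = X t * (\<Sum>i<n - 1. X t ^ i)" for t
  have factor: "X t - X t ^ n = (1 - X t) * S t" for t
  proof -
    have "X t - X t ^ n = X t * (1 - X t ^ (n - 1))"
      using \<open>n \<ge> 1\<close> by (cases n) (simp_all add: algebra_simps)
    then show ?thesis
      unfolding S_def one_diff_power_eq by (simp add: mult_ac)
  qed
  have "((\<lambda>t. k * S t) \<longlongrightarrow> k * (1 * (\<Sum>i<n - 1. 1 ^ i))) at_top"
    unfolding S_def by (intro tendsto_intros lim)
  then have "\<forall>\<^sub>F t in at_top. r < k * S t"
    using r \<open>n \<ge> 1\<close> by (intro order_tendstoD(1)) (auto simp: of_nat_diff)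
  then obtain T where T: "\<And>t. t \<ge> T \<Longrightarrow> r < k * S t"
    unfolding eventually_at_top_linorder by blast
  define z where "z t = (1 - X t) * exp (r * t)" for t
  have z_le: "z t \<le> z T" if "t \<ge> T" for t
  proof (rule DERIV_nonpos_imp_nonincreasing[OF that])
    fix s assume "T \<le> s"
    have "r * (1 - X s) \<le> k * S s * (1 - X s)"
      using T[OF \<open>T \<le> s\<close>] X_le[of s] by (simp add: mult_right_mono)
    also have "\<dots> \<le> Y s"
      using Y[of s] by (simp add: factor mult_ac)
    finally have "exp (r * s) * (r * (1 - X s) - Y s) \<le> 0"
      by (simp add: mult_nonneg_nonpos)
    moreover have "(z has_real_derivative exp (r * s) * (r * (1 - X s) - Y s)) (at s)"
      unfolding z_def by (auto intro!: derivative_eq_intros dX simp: algebra_simps)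
    ultimately show "\<exists>y. (z has_real_derivative y) (at s) \<and> y \<le> 0"
      by blast
  qed
  have "1 - X t \<le> z T * exp (- r * t)" if "t \<ge> T" for t
  proof -
    have "1 - X t = z t * exp (- r * t)"
      by (simp add: z_def mult.assoc flip: exp_add)
    also have "\<dots> \<le> z T * exp (- r * t)"
      using z_le[OF that] by simp
    finally show ?thesis .
  qed
  then show ?thesis
    unfolding eventually_at_top_linorder by blast
qed

lemma exp_sandwich_coeff_nonpos:
  fixes f :: "real \<Rightarrow> real"
  assumes lower: "\<forall>\<^sub>F t in at_top. b * exp (- s * t) \<le> f t"
    and upper: "\<forall>\<^sub>F t in at_top. f t \<le> M * exp (- r * t)" and "s < r"
  shows "b \<le> 0"
proof -
  from lower upper have "\<forall>\<^sub>F t in at_top. b \<le> M * exp ((s - r) * t)"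
  proof eventually_elim
    case (elim t)
    then have "b * exp (- s * t) * exp (s * t) \<le> M * exp (- r * t) * exp (s * t)"
      by (intro mult_right_mono) simp_all
    moreover have "- r * t + s * t = (s - r) * t"
      by (simp add: algebra_simps)
    ultimately show ?case
      by (simp add: mult.assoc flip: exp_add)
  qed
  moreover have "((\<lambda>t. M * exp ((s - r) * t)) \<longlongrightarrow> 0) at_top"
    using \<open>s < r\<close> by real_asymp
  ultimately show "b \<le> 0"
    using tendsto_lowerbound trivial_limit_at_top_linorder by blast
qed

theorem no_direct_connection_above_critical:
  assumes n: "n \<ge> 2" and k: "k > 0" and kn: "k ^ 2 > 1 / (real n - 1)"
    and c: "c > (k ^ 2 - 1) / k"
  shows "\<not> direct_connection n n 1 k c X Y"
proof
  assume dc: "direct_connection n n 1 k c X Y"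
  note dX = tw_solution_has_derivative(1)[OF direct_connectionD(1)[OF dc]]
  have X_range: "0 < X t" "X t < 1" for t
    using direct_connectionD(2)[OF dc] direct_connection_less_one[OF dc] by auto
  obtain a where "a > 0" and deviation_pos: "\<And>t. deviation n k X Y t > 0"
    and deviation_ge: "\<And>t. t \<ge> 0 \<Longrightarrow> a * exp (- t / k) \<le> deviation n k X Y t"
    using deviation_exp_lower_bound[OF dc _ k c] n by auto
  have Y_ge: "k * (X t - X t ^ n) \<le> Y t" for t
    using deviation_pos[of t] by (simp add: deviation_def)
  have "a * exp (- t / k) \<le> Y t" if "t \<ge> 0" for t
  proof -
    have "0 < k * (X t - X t ^ n)"
      using power_less_self[OF X_range n, of t] k by simp
    with deviation_ge[OF that] show ?thesis
      by (simp add: deviation_def)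
  qed
  then have "k * a * exp (- t / k) \<le> 1 - X t" if "t \<ge> 0" for t
    using limit_gap_ge_exp[OF dX direct_connectionD(6)[OF dc] _ k that] by blast
  then have lower: "\<forall>\<^sub>F t in at_top. k * a * exp (- (1 / k) * t) \<le> 1 - X t"
    unfolding eventually_at_top_linorder by auto
  have "1 < k ^ 2 * (real n - 1)"
    using kn n by (simp add: field_simps)
  then have "1 / k < k * (real n - 1)"
    using k by (simp add: field_simps power2_eq_square)
  then obtain r where r: "1 / k < r" "r < k * (real n - 1)"
    using dense by blast
  have "n \<ge> 1"
    using n by simp
  from gap_to_one_le_exp[OF dX direct_connectionD(6)[OF dc] less_imp_le[OF X_range(2)] Y_ge this r(2)]
  obtain M where "\<forall>\<^sub>F t in at_top. 1 - X t \<le> M * exp (- r * t)"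
    by blast
  from exp_sandwich_coeff_nonpos[OF lower this r(1)] k \<open>a > 0\<close> show False
    by (simp add: mult_le_0_iff)
qed

lemma logistic_solution:
  fixes P :: "real \<Rightarrow> real"
  assumes dP: "\<And>t. (P has_real_derivative a * P t * (1 - P t)) (at t)"
    and P_range: "\<And>t. 0 < P t" "\<And>t. P t < 1"
  shows "\<exists>C > 0. \<forall>t. P t = 1 / (1 + C * exp (- a * t))"
proof -
  define V where "V t = (1 / P t - 1) * exp (a * t)" for t
  have "(V has_real_derivative 0) (at t)" for t
  proof -
    have "(V has_real_derivative
        - (a * P t * (1 - P t)) / (P t)\<^sup>2 * exp (a * t) + (1 / P t - 1) * (exp (a * t) * a)) (at t)"
      unfolding V_def using P_range(1)[of t]
      by (auto intro!: derivative_eq_intros dP simp: power2_eq_square)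
    moreover have "- (a * P t * (1 - P t)) / (P t)\<^sup>2 * exp (a * t) + (1 / P t - 1) * (exp (a * t) * a) = 0"
      using P_range(1)[of t] by (simp add: field_simps power2_eq_square)
    ultimately show ?thesis
      by simp
  qed
  then have V_const: "V t = V 0" for t
    using DERIV_isconst_all by blast
  have "V 0 > 0"
    using P_range[of 0] by (simp add: V_def)
  moreover have "P t = 1 / (1 + V 0 * exp (- a * t))" for t
  proof -
    have "(1 / P t - 1) * exp (a * t) * exp (- a * t) = V 0 * exp (- a * t)"
      using V_const[of t] by (simp add: V_def)
    then have "1 / P t = 1 + V 0 * exp (- a * t)"
      by (simp add: mult.assoc flip: exp_add)
    then show ?thesis
      by (metis divide_divide_eq_right div_by_1 mult_1)
  qed
  ultimately show ?thesis
    by blast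
qed

lemma bernoulli_solution:
  fixes X :: "real \<Rightarrow> real" and n :: nat
  assumes n: "n \<ge> 2" and dX: "\<And>t. (X has_real_derivative k * (X t - X t ^ n)) (at t)"
    and X_range: "\<And>t. 0 < X t" "\<And>t. X t < 1"
  shows "\<exists>C > 0. \<forall>t. X t = (1 + C * exp (- k * (real n - 1) * t)) powr (- 1 / (real n - 1))"
proof -
  obtain m where n_eq: "n = Suc m" and "m \<ge> 1"
    using n by (cases n) auto
  have m: "real n - 1 = real m"
    by (simp add: n_eq)
  have "((\<lambda>t. X t ^ m) has_real_derivative (k * real m) * X t ^ m * (1 - X t ^ m)) (at t)" for t
  proof -
    have "((\<lambda>t. X t ^ m) has_real_derivative real m * X t ^ (m - 1) * (k * (X t - X t ^ n))) (at t)"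
      by (auto intro!: derivative_eq_intros dX)
    moreover have "real m * X t ^ (m - 1) * (k * (X t - X t ^ n))
        = k * real m * (X t ^ (m - 1) * X t) * (1 - X t ^ m)"
      by (simp add: n_eq algebra_simps)
    moreover have "X t ^ (m - 1) * X t = X t ^ m"
      using \<open>m \<ge> 1\<close> by (simp flip: power_Suc2)
    ultimately show ?thesis
      by (simp only:)
  qed
  moreover have "0 < X t ^ m" "X t ^ m < 1" for t
    using X_range[of t] \<open>m \<ge> 1\<close> by (simp_all add: power_less_one_iff)
  ultimately obtain C where "C > 0" and P: "\<And>t. X t ^ m = 1 / (1 + C * exp (- (k * real m) * t))"
    using logistic_solution[of "\<lambda>t. X t ^ m"] by blast
  have "X t = (1 + C * exp (- k * real m * t)) powr (- 1 / real m)" for t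
  proof -
    have "X t = (X t ^ m) powr (1 / real m)"
      using X_range(1)[of t] \<open>m \<ge> 1\<close> by (simp add: powr_realpow [symmetric] powr_powr)
    also have "\<dots> = (1 + C * exp (- k * real m * t)) powr (- 1 / real m)"
      using \<open>C > 0\<close> by (simp add: P add_pos_nonneg powr_divide powr_minus_divide)
    finally show ?thesis .
  qed
  with \<open>C > 0\<close> show ?thesis
    unfolding m by blast
qed

lemma bernoulli_explicit_solution:
  fixes n :: nat and k C :: real
  assumes n: "n \<ge> 2" and C: "C > 0"
  defines "X \<equiv> \<lambda>t. (1 + C * exp (- k * (real n - 1) * t)) powr (- 1 / (real n - 1))"
  shows "(X has_real_derivative k * (X t - X t ^ n)) (at t)" and "0 < X t" and "X t < 1"
proof -
  define m where "m = real n - 1"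
  have m: "m > 0"
    using n by (simp add: m_def)
  define B where "B t = 1 + C * exp (- k * m * t)" for t
  have X_eq: "X t = B t powr (- 1 / m)" for t
    by (simp add: X_def B_def m_def)
  have B_gt: "B t > 1" for t
    using C by (simp add: B_def)
  have "(X has_real_derivative
      (- 1 / m) * B t powr (- 1 / m - 1) * (C * (exp (- k * m * t) * (- k * m)))) (at t)"
    unfolding X_eq[abs_def] B_def using B_gt[of t]
    by (auto intro!: derivative_eq_intros simp: B_def)
  moreover have "(- 1 / m) * B t powr (- 1 / m - 1) * (C * (exp (- k * m * t) * (- k * m)))
      = k * (B t * B t powr (- 1 / m - 1) - B t powr (- 1 / m - 1))"
    using m by (simp add: B_def field_simps)
  moreover have "B t * B t powr (- 1 / m - 1) = X t"
    using B_gt[of t] by (simp add: X_eq powr_diff)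
  moreover have "B t powr (- 1 / m - 1) = X t ^ n"
  proof -
    have "real n * (- 1 / m) = - 1 / m - 1"
      using m by (simp add: m_def field_simps)
    then show ?thesis
      using B_gt[of t] by (simp add: X_eq powr_power)
  qed
  ultimately show "(X has_real_derivative k * (X t - X t ^ n)) (at t)"
    by simp
  show "0 < X t"
    using B_gt[of t] by (simp add: X_eq)
  show "X t < 1"
    using B_gt[of t] m by (simp add: X_eq powr_less_one)
qed

lemma tw_solution_on_critical_curve:
  assumes dX: "\<And>t. (X has_real_derivative k * (X t - X t ^ n)) (at t)" and "k \<noteq> 0"
  shows "tw_solution n n 1 k ((k ^ 2 - 1) / k) X (\<lambda>t. k * (X t - X t ^ n))"
  unfolding tw_solution_def
proof (intro allI conjI dX)
  fix t
  have "((\<lambda>t. k * (X t - X t ^ n)) has_real_derivative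
      k * (k * (X t - X t ^ n) - real n * X t ^ (n - 1) * (k * (X t - X t ^ n)))) (at t)"
    by (auto intro!: derivative_eq_intros dX)
  moreover have "k * (k * (X t - X t ^ n) - real n * X t ^ (n - 1) * (k * (X t - X t ^ n)))
      = (k ^ 2 - 1) / k * (k * (X t - X t ^ n)) - k * real n * X t ^ (n - 1) * (k * (X t - X t ^ n))
        - X t ^ n + X t ^ 1"
    using \<open>k \<noteq> 0\<close> by (simp add: field_simps power2_eq_square)
  ultimately show "((\<lambda>t. k * (X t - X t ^ n)) has_real_derivative
      (k ^ 2 - 1) / k * (k * (X t - X t ^ n)) - k * real n * X t ^ (n - 1) * (k * (X t - X t ^ n))
        - X t ^ n + X t ^ 1) (at t)"
    by simp
qed

lemma direct_connection_explicit:
  fixes n :: nat and k C :: real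
  assumes n: "n \<ge> 2" and k: "k > 0" and C: "C > 0"
  defines "X \<equiv> \<lambda>t. (1 + C * exp (- k * (real n - 1) * t)) powr (- 1 / (real n - 1))"
  shows "direct_connection n n 1 k ((k ^ 2 - 1) / k) X (\<lambda>t. k * (X t - X t ^ n))"
proof -
  have dX: "(X has_real_derivative k * (X t - X t ^ n)) (at t)" for t
    unfolding X_def by (rule bernoulli_explicit_solution(1)[OF n C])
  have X_range: "0 < X t" "X t < 1" for t
    unfolding X_def by (rule bernoulli_explicit_solution(2,3)[OF n C])+
  have m: "real n - 1 > 0"
    using n by simp
  have "((\<lambda>t. 1 + C * exp (- k * (real n - 1) * t)) \<longlongrightarrow> 1 + C * 0) at_top"
    using k m by (intro tendsto_intros) real_asymp
  then have "(X \<longlongrightarrow> (1 + C * 0) powr (- 1 / (real n - 1))) at_top"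
    unfolding X_def by (rule tendsto_powr[OF _ tendsto_const]) simp
  then have X_top: "(X \<longlongrightarrow> 1) at_top"
    by simp
  have "filterlim (\<lambda>t. 1 + C * exp (- k * (real n - 1) * t)) at_top at_bot"
    using k m C by real_asymp
  then have X_bot: "(X \<longlongrightarrow> 0) at_bot"
    unfolding X_def using m by (intro tendsto_neg_powr) simp_all
  have "((\<lambda>t. k * (X t - X t ^ n)) \<longlongrightarrow> k * (1 - 1 ^ n)) at_top"
       "((\<lambda>t. k * (X t - X t ^ n)) \<longlongrightarrow> k * (0 - 0 ^ n)) at_bot"
    by (intro tendsto_intros X_top X_bot)+
  moreover have "(0::real) ^ n = 0"
    using n by simp
  moreover have "0 < k * (X t - X t ^ n)" for t
    using power_less_self[OF X_range n] k by simp
  ultimately show ?thesis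
    unfolding direct_connection_def
    using tw_solution_on_critical_curve[OF dX] X_range(1) X_top X_bot k n
    by (auto intro!: tendsto_Pair)
qed

theorem mainTheorem12:
  fixes n :: nat and k :: real
  assumes "n \<ge> 2" and "k > 0" and "k ^ 2 > 1 / (real n - 1)"
  shows "critical_velocity n n 1 k = (k ^ 2 - 1) / k \<and>
         (\<forall>X Y. direct_connection n n 1 k ((k ^ 2 - 1) / k) X Y \<longleftrightarrow>
            (\<exists>C > 0. \<forall>t. X t = (1 + C * exp (- k * (real n - 1) * t)) powr (- 1 / (real n - 1))
                         \<and> Y t = k * (X t - X t ^ n)))"
proof (intro conjI allI iffI)
  show "critical_velocity n n 1 k = (k ^ 2 - 1) / k"
    unfolding critical_velocity_def connects_directly_def
  proof (rule cSup_eq_maximum)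
    show "(k ^ 2 - 1) / k \<in> {c. \<exists>X Y. direct_connection n n 1 k c X Y}"
      using direct_connection_explicit[OF assms(1,2), of 1] by auto
    show "c \<le> (k ^ 2 - 1) / k" if "c \<in> {c. \<exists>X Y. direct_connection n n 1 k c X Y}" for c
      using that no_direct_connection_above_critical[OF assms] by (auto simp: not_less[symmetric])
  qed
next
  fix X Y
  assume dc: "direct_connection n n 1 k ((k ^ 2 - 1) / k) X Y"
  have "n \<ge> 1"
    using assms(1) by simp
  note on_curve = direct_connection_critical_on_curve[OF dc this assms(2)]
  have "(X has_real_derivative k * (X t - X t ^ n)) (at t)" for t
    using tw_solution_has_derivative(1)[OF direct_connectionD(1)[OF dc]] on_curve by simp
  from bernoulli_solution[OF assms(1) this direct_connectionD(2)[OF dc] direct_connection_less_one[OF dc]]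
    and on_curve
  show "\<exists>C > 0. \<forall>t. X t = (1 + C * exp (- k * (real n - 1) * t)) powr (- 1 / (real n - 1))
      \<and> Y t = k * (X t - X t ^ n)"
    by blast
next
  fix X Y
  assume "\<exists>C > 0. \<forall>t. X t = (1 + C * exp (- k * (real n - 1) * t)) powr (- 1 / (real n - 1))
      \<and> Y t = k * (X t - X t ^ n)"
  then obtain C where "C > 0"
    and "X = (\<lambda>t. (1 + C * exp (- k * (real n - 1) * t)) powr (- 1 / (real n - 1)))"
    and "Y = (\<lambda>t. k * (X t - X t ^ n))"
    by fast
  then show "direct_connection n n 1 k ((k ^ 2 - 1) / k) X Y"
    using direct_connection_explicit[OF assms(1,2)] by blast
qed

end
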